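(* Suppose Assumption A and Assumption B (defined in the context) hold for the dynamic accuracy DFO algorithm described in the context. If at iteration $k$ the model $m^k$ is fully linear in $B(\theta^k,\Delta^k)$ and $$\Delta^k\le c_0\|g^k\|,\qquad c_0:=\min\left(\frac{1-\eta_2-2\eta_1'}{4\kappa_{\rm ef}},\frac{1}{\kappa_H}\right)>0,$$ then $\tilde\rho^k\ge\eta_2$.
   Context: Setting. Let $n,d\ge 1$ and $r=(r_1,\ldots,r_n):\mathbb{R}^d\to\mathbb{R}^n$, with objective $f(\theta)=\frac1n\|r(\theta)\|^2=\frac1n\sum_{i=1}^n r_i(\theta)^2$ (Euclidean norm). In the application, $r_i(\theta)=\|\hat x_i(\theta)-x_i\|$ where $\hat x_i(\theta)$ is the minimizer of a lower-level problem that can only be computed approximately. The algorithm never sees $r$ exactly: for any $\theta$ it can compute an approximation $\tilde r(\theta)$ (in the application $\tilde r_i(\theta)=\|\tilde x_i(\theta)-x_i\|$ with $\tilde x_i(\theta)$ an approximate minimizer whose error can be made as small as desired), and sets $\tilde f(\theta)=\frac1n\|\tilde r(\theta)\|^2$. We say $\tilde f(\theta)$ is evaluated with accuracy $\delta$ if $|\tilde f(\theta)-f(\theta)|\le\delta$. Models. At iteration $k$ the algorithm holds an iterate $\theta^k$, a radius $\Delta^k>0$, and interpolation points $z^0=\theta^k,z^1,\ldots,z^d\in\mathbb{R}^d$ with $z^1-\theta^k,\ldots,z^d-\theta^k$ linearly independent; $J^k\in\mathbb{R}^{n\times d}$ is the unique matrix with $\tilde r(\theta^k)+J^k(z^t-\theta^k)=\tilde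 r(z^t)$ for $t=1,\ldots,d$. Set $M^k(s)=\tilde r(\theta^k)+J^k s$ and $m^k(s)=\frac1n\|M^k(s)\|^2=\tilde f(\theta^k)+(g^k)^Ts+\frac12 s^TH^ks$ with $g^k=\frac2n (J^k)^T\tilde r(\theta^k)$, $H^k=\frac2n(J^k)^TJ^k$. Fixed constants $\kappa_{\rm ef},\kappa_{\rm eg}>0$ (independent of $k,\theta^k,\Delta^k$) are given, and $m^k$ is called fully linear in $B(\theta^k,\Delta^k)$ if $|f(\theta^k+s)-m^k(s)|\le\kappa_{\rm ef}(\Delta^k)^2$ and $\|\nabla f(\theta^k+s)-\nabla m^k(s)\|\le\kappa_{\rm eg}\Delta^k$ for all $\|s\|\le\Delta^k$. The algorithm has a procedure which, by replacing interpolation points, makes the model fully linear in a given ball. Algorithm. Parameters: $\Delta_{\max}>0$, $0<\gamma_{\rm dec}<1<\gamma_{\rm inc}$, $0<\eta_1\le\eta_2<1$, $0<\eta_1'<\min(\eta_1,1-\eta_2)/2$, $\epsilon>0$; inputs $\theta^0\in\mathbb{R}^d$, $0<\Delta^0\le\Delta_{\max}$. Build an initial model $m^0$ from an arbitrary interpolation set. For $k=0,1,2,\ldots$: (1) [accuracy phase] repeat: (a) except on the first pass, re-evaluate $\tilde f(\theta^k)$ with accuracy $\delta^k\le\eta_1'[m^k(0)-m^k(s^k)]$ using the $s^k$ from the previous pass; (b) [criticality phase] if $\|g^k\|\le\epsilon$, replace $\Delta^k$ by $\gamma_{\rm dec}^i\Delta^k$ for $i=0,1,2,\ldots$ (making the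 model fully linear in the current ball) until $m^k$ is fully linear in $B(\theta^k,\Delta^k)$ and $\Delta^k\le\|g^k\|$; (c) compute $s^k$ with $\|s^k\|\le\Delta^k$ approximately minimizing $m^k$ over that ball; until $\tilde f(\theta^k)$ has been evaluated with accuracy $\delta^k\le\eta_1'[m^k(0)-m^k(s^k)]$. (2) Evaluate $\tilde f(\theta^k+s^k)$ with accuracy $\delta^k_+\le\eta_1'[m^k(0)-m^k(s^k)]$ and set $\tilde\rho^k=\frac{\tilde f(\theta^k)-\tilde f(\theta^k+s^k)}{m^k(0)-m^k(s^k)}$. (3) Set $\theta^{k+1}=\theta^k+s^k$ if $\tilde\rho^k\ge\eta_2$, or if $\tilde\rho^k\ge\eta_1$ and $m^k$ is fully linear in $B(\theta^k,\Delta^k)$; otherwise $\theta^{k+1}=\theta^k$. Set $\Delta^{k+1}=\min(\gamma_{\rm inc}\Delta^k,\Delta_{\max})$ if $\tilde\rho^k\ge\eta_2$; $\Delta^{k+1}=\Delta^k$ if $\tilde\rho^k<\eta_2$ and $m^k$ is not fully linear in $B(\theta^k,\Delta^k)$; $\Delta^{k+1}=\gamma_{\rm dec}\Delta^k$ otherwise. (4) If $\theta^{k+1}=\theta^k+s^k$, form $m^{k+1}$ by adding $\theta^{k+1}$ to the interpolation set (removing an existing point); otherwise set $m^{k+1}=m^k$ if $m^k$ is fully linear in $B(\theta^k,\Delta^k)$, else form $m^{k+1}$ by making $m^k$ fully linear in $B(\theta^{k+1},\Delta^{k+1})$. Assumption A: the set $\mathcal{B}=\{z: \|z-\theta\|\le\Delta_{\max}\text{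 for some }\theta\text{ with }f(\theta)\le f(\theta^0)\}$ is bounded, and $r$ is continuously differentiable on $\mathcal{B}$ with $\partial r$ Lipschitz continuous with constant $L_J$ on $\mathcal{B}$. Assumption B: for all $k$, $m^k(0)-m^k(s^k)\ge\frac12\|g^k\|\min\left(\Delta^k,\frac{\|g^k\|}{\|H^k\|+1}\right)$, and there is $\kappa_H\ge1$ with $\|H^k\|+1\le\kappa_H$ for all $k$. *)

theory Defs
  imports "HOL-Analysis.Analysis"
begin

text \<open>Residual vectors live in real^'n (n = CARD('n)), parameters in real^'d (d = CARD('d)).
  Matrices are real^'d^'n (n x d). Matrix norms are operator (spectral) norms.\<close>

definition fobj :: "(real^'d \<Rightarrow> real^'n) \<Rightarrow> real^'d \<Rightarrow> real" where
  "fobj r \<theta> = (1 / real CARD('n)) * (norm (r \<theta>))^2"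

definition ftil :: "real^'n \<Rightarrow> real" where
  "ftil rv = (1 / real CARD('n)) * (norm rv)^2"

text \<open>Model m(s) = (1/n) ||rk + J s||^2, with rk = tilde r(theta^k).\<close>
definition mmodel :: "real^'n \<Rightarrow> real^'d^'n \<Rightarrow> real^'d \<Rightarrow> real" where
  "mmodel rk J s = (1 / real CARD('n)) * (norm (rk + J *v s))^2"

definition gmod :: "real^'n \<Rightarrow> real^'d^'n \<Rightarrow> real^'d" where
  "gmod rk J = (2 / real CARD('n)) *\<^sub>R (transpose J *v rk)"

definition Hmod :: "real^'d^'n \<Rightarrow> real^'d^'d" where
  "Hmod J = (\<chi> i j. (2 / real CARD('n)) * ((transpose J ** J) $ i $ j))"

definition matnorm :: "real^'a^'b \<Rightarrow> real" where
  "matnorm A = onorm (\<lambda>x. A *v x)"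

text \<open>Fully linear model in B(theta, Delta); the gradient of m at s is g + H s.\<close>
definition fully_linear ::
  "(real^'d \<Rightarrow> real^'n) \<Rightarrow> real^'n \<Rightarrow> real^'d^'n \<Rightarrow> real^'d \<Rightarrow> real \<Rightarrow> real \<Rightarrow> real \<Rightarrow> bool" where
  "fully_linear r rk J \<theta> \<Delta> kef keg \<longleftrightarrow>
     (\<forall>s. norm s \<le> \<Delta> \<longrightarrow>
        \<bar>fobj r (\<theta> + s) - mmodel rk J s\<bar> \<le> kef * \<Delta>^2 \<and>
        (\<exists>D. GDERIV (fobj r) (\<theta> + s) :> D \<and>
             norm (D - (gmod rk J + Hmod J *v s)) \<le> keg * \<Delta>))"

definition levelB :: "(real^'d \<Rightarrow> real^'n) \<Rightarrow> real^'d \<Rightarrow> real \<Rightarrow> (real^'d) set" where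
  "levelB r \<theta>0 Dmax = {z. \<exists>\<theta>. fobj r \<theta> \<le> fobj r \<theta>0 \<and> norm (z - \<theta>) \<le> Dmax}"

definition assumptionA :: "(real^'d \<Rightarrow> real^'n) \<Rightarrow> real^'d \<Rightarrow> real \<Rightarrow> real \<Rightarrow> bool" where
  "assumptionA r \<theta>0 Dmax LJ \<longleftrightarrow> bounded (levelB r \<theta>0 Dmax) \<and>
     (\<exists>Jr :: real^'d \<Rightarrow> real^'d^'n.
        (\<forall>x\<in>levelB r \<theta>0 Dmax. (r has_derivative (\<lambda>h. Jr x *v h)) (at x)) \<and>
        continuous_on (levelB r \<theta>0 Dmax) Jr \<and>
        (\<forall>x\<in>levelB r \<theta>0 Dmax. \<forall>y\<in>levelB r \<theta>0 Dmax.
            matnorm (Jr x - Jr y) \<le> LJ * norm (x - y)))"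

end

theory Submission
  imports Defs
begin

text \<open>Once \<open>\<Delta>\<close> is small compared with \<open>\<parallel>g\<parallel>\<close>, the Cauchy decrease is at least \<open>\<parallel>g\<parallel>\<Delta>/2\<close>,
  i.e. linear in \<open>\<Delta>\<close>, whereas a fully linear model misjudges \<open>f(\<theta> + s)\<close> only by
  \<open>\<kappa>\<^sub>e\<^sub>f \<Delta>\<^sup>2\<close>.\<close>

lemma mmodel_zero: "mmodel rk J 0 = ftil rk"
  by (simp add: mmodel_def ftil_def)

lemma matnorm_nonneg: "matnorm A \<ge> 0"
  by (simp add: matnorm_def onorm_pos_le matrix_vector_mul_bounded_linear)

lemma cauchy_decrease_ge_half_radius:
  fixes P g h \<kappa> \<Delta> :: real
  assumes "P \<ge> 1/2 * g * min \<Delta> (g / (h + 1))"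
    and "0 \<le> g" "0 \<le> h" "h + 1 \<le> \<kappa>" "\<Delta> \<le> g / \<kappa>"
  shows "g * \<Delta> / 2 \<le> P"
proof -
  have "g / \<kappa> \<le> g / (h + 1)"
    using assms(2-4) by (intro divide_left_mono) auto
  then have "min \<Delta> (g / (h + 1)) = \<Delta>"
    using assms(5) by simp
  then show ?thesis
    using assms(1) by simp
qed

lemma quadratic_error_le_decrease:
  fixes \<kappa> \<Delta> c g P :: real
  assumes "0 < \<kappa>" "0 \<le> \<Delta>" "0 \<le> c" "\<Delta> \<le> c / (4 * \<kappa>) * g" "g * \<Delta> / 2 \<le> P"
  shows "\<kappa> * \<Delta>\<^sup>2 \<le> c / 2 * P"
proof -
  have "\<kappa> * \<Delta> \<le> c * g / 4"
    using assms(1,4) by (simp add: field_simps)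
  then have "\<kappa> * \<Delta>\<^sup>2 \<le> c / 2 * (g * \<Delta> / 2)"
    using assms(2) mult_right_mono by (fastforce simp: power2_eq_square)
  also have "\<dots> \<le> c / 2 * P"
    using assms(3,5) by (intro mult_left_mono) auto
  finally show ?thesis .
qed

lemma ratio_ge_of_errors:
  fixes m0 ms f ft \<eta> \<eta>' e :: real
  assumes "0 < m0 - ms"
    and "\<bar>f - ms\<bar> \<le> e" "\<bar>ft - f\<bar> \<le> \<eta>' * (m0 - ms)"
    and "e \<le> (1 - \<eta> - \<eta>') * (m0 - ms)"
  shows "(m0 - ft) / (m0 - ms) \<ge> \<eta>"
proof -
  have "ms - f \<ge> - e" "f - ft \<ge> - (\<eta>' * (m0 - ms))"
    using assms(2,3) by linarith+
  then have "m0 - ft \<ge> \<eta> * (m0 - ms)"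
    using assms(4) by (simp add: algebra_simps)
  then show ?thesis
    using assms(1) by (simp add: pos_le_divide_eq)
qed

theorem lemma7:
  fixes r :: "real^'d \<Rightarrow> real^'n"
    and \<theta>0 \<theta> s :: "real^'d"
    and J :: "real^'d^'n"
    and rk rplus :: "real^'n"
    and z :: "'d \<Rightarrow> real^'d" and rz :: "'d \<Rightarrow> real^'n"
    and \<Delta> \<Delta>max \<gamma>dec \<gamma>inc \<eta>1 \<eta>2 \<eta>1' \<epsilon> kef keg \<kappa>H LJ \<delta> \<delta>plus :: real
  assumes params: "\<Delta>max > 0" "0 < \<gamma>dec" "\<gamma>dec < 1" "1 < \<gamma>inc"
      "0 < \<eta>1" "\<eta>1 \<le> \<eta>2" "\<eta>2 < 1" "0 < \<eta>1'" "\<eta>1' < min \<eta>1 (1 - \<eta>2) / 2"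
      "\<epsilon> > 0" "kef > 0" "keg > 0"
    and radius: "0 < \<Delta>" "\<Delta> \<le> \<Delta>max"
    and interp_indep: "inj (\<lambda>t. z t - \<theta>)" "independent (range (\<lambda>t. z t - \<theta>))"
    and interp: "\<And>t. rk + J *v (z t - \<theta>) = rz t"
    and A: "assumptionA r \<theta>0 \<Delta>max LJ"
    and step: "norm s \<le> \<Delta>"
    and B1: "mmodel rk J 0 - mmodel rk J s \<ge>
               (1/2) * norm (gmod rk J) * min \<Delta> (norm (gmod rk J) / (matnorm (Hmod J) + 1))"
    and B2: "\<kappa>H \<ge> 1" "matnorm (Hmod J) + 1 \<le> \<kappa>H"
    and acc: "\<bar>ftil rk - fobj r \<theta>\<bar> \<le> \<delta>"
             "\<delta> \<le> \<eta>1' * (mmodel rk J 0 - mmodel rk J s)"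
    and acc_plus: "\<bar>ftil rplus - fobj r (\<theta> + s)\<bar> \<le> \<delta>plus"
             "\<delta>plus \<le> \<eta>1' * (mmodel rk J 0 - mmodel rk J s)"
    and FL: "fully_linear r rk J \<theta> \<Delta> kef keg"
    and small: "\<Delta> \<le> min ((1 - \<eta>2 - 2 * \<eta>1') / (4 * kef)) (1 / \<kappa>H) * norm (gmod rk J)"
  shows "(ftil rk - ftil rplus) / (mmodel rk J 0 - mmodel rk J s) \<ge> \<eta>2"
proof -
  define g where "g = norm (gmod rk J)"
  define P where "P = mmodel rk J 0 - mmodel rk J s"
  define c where "c = 1 - \<eta>2 - 2 * \<eta>1'"
  have c_pos: "c > 0"
    using params(9) unfolding c_def by (simp add: min_def split: if_splits)
  have g_pos: "g > 0"
    using small radius(1) unfolding g_def by (auto intro: ccontr)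
  have \<Delta>_le_c: "\<Delta> \<le> c / (4 * kef) * g" and \<Delta>_le_H: "\<Delta> \<le> g / \<kappa>H"
    using small g_pos unfolding c_def g_def by (simp_all add: min_mult_distrib_right)
  have decrease: "g * \<Delta> / 2 \<le> P"
    using cauchy_decrease_ge_half_radius[OF B1 _ matnorm_nonneg B2(2)] \<Delta>_le_H
    unfolding P_def g_def by simp
  have model_error: "kef * \<Delta>\<^sup>2 \<le> c / 2 * P"
    using quadratic_error_le_decrease[OF params(11) _ _ \<Delta>_le_c decrease] radius(1) c_pos by simp
  have P_pos: "0 < P"
    using decrease mult_pos_pos[OF g_pos radius(1)] by linarith
  have "c / 2 * P \<le> (1 - \<eta>2 - \<eta>1') * P"
    using P_pos params(7) unfolding c_def by (intro mult_right_mono) auto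
  then have "kef * \<Delta>\<^sup>2 \<le> (1 - \<eta>2 - \<eta>1') * P"
    using model_error by linarith
  moreover have "\<bar>fobj r (\<theta> + s) - mmodel rk J s\<bar> \<le> kef * \<Delta>\<^sup>2"
    using FL step unfolding fully_linear_def by blast
  moreover have "\<bar>ftil rplus - fobj r (\<theta> + s)\<bar> \<le> \<eta>1' * P"
    using acc_plus unfolding P_def by linarith
  ultimately show ?thesis
    using ratio_ge_of_errors P_pos unfolding P_def mmodel_zero by blast
qed

end
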